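(* Let $H\in(1/2,1)$ and $k\ge2$. As $n\to\infty$: (i) \[\sum_{\substack{i_1,\dots,i_k\in\mathbb{N}\\ 1=i_1<i_2<\dots<i_k=n}}\ \prod_{j=2}^{k}|i_j-i_{j-1}|^{2H-2}\ \sim\ \frac{\Gamma(2H-1)^{k-1}}{\Gamma((2H-1)(k-1))}\,n^{(2H-1)(k-1)-1};\] (ii) \[\sum_{\substack{i_1,\dots,i_k\in\{1,\dots,n\}\\ i_1<i_2<\dots<i_k}}\ \prod_{j=2}^{k}|i_j-i_{j-1}|^{2H-2}\ \sim\ \frac{\Gamma(2H-1)^{k-1}}{\Gamma((2H-1)(k-1)+2)}\,n^{(2H-1)(k-1)+1}.\]
   Context: $a_n\sim b_n$ means $a_n/b_n\to1$ as $n\to\infty$. *)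

theory Defs
  imports "HOL-Analysis.Analysis"
begin

text \<open>Weight of a tuple (i_1,...,i_k), given as a list of length k (list index j-1 holds i_j):
  the product over j = 2..k of |i_j - i_{j-1}|^(2H-2).\<close>
definition tuple_weight :: "real \<Rightarrow> nat list \<Rightarrow> real" where
  "tuple_weight H xs =
     (\<Prod>j\<in>{1..<length xs}. \<bar>real (xs ! j) - real (xs ! (j - 1))\<bar> powr (2 * H - 2))"

definition pinned_tuples :: "nat \<Rightarrow> nat \<Rightarrow> nat list set" where
  "pinned_tuples k n = {xs. length xs = k \<and> sorted_wrt (<) xs \<and> xs ! 0 = 1 \<and> xs ! (k - 1) = n}"

definition free_tuples :: "nat \<Rightarrow> nat \<Rightarrow> nat list set" where
  "free_tuples k n = {xs. length xs = k \<and> sorted_wrt (<) xs \<and> set xs \<subseteq> {1..n}}"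

end

theory Submission
  imports Defs "HOL-Real_Asymp.Real_Asymp"
begin

text \<open>
  Summing over all but the last index, both sums become iterated discrete convolutions with the
  kernel \<open>j powr (2H - 2)\<close>, and for (ii) one more convolution with the constant sequence 1.
  The analytic core is a discrete Beta integral: if \<open>a n \<sim> A n^(p-1)\<close> and \<open>b n \<sim> B n^(q-1)\<close>
  and \<open>b \<ge> 0\<close>, then their convolution is \<open>\<sim> A B \<Gamma>(p) \<Gamma>(q) / \<Gamma>(p+q) n^(p+q-1)\<close>.
  This holds exactly, by Vandermonde's identity, for the Taylor coefficients of \<open>(1 - x) powr -p\<close>,
  which grow like \<open>n^(p-1) / \<Gamma>(p)\<close> by Gauss's product formula for \<open>\<Gamma>\<close>; and replacing one
  factor by an asymptotically equivalent one changes the convolution only negligibly, because the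
  finitely many early terms where the two factors still differ are swamped by the growing total.
  With \<open>\<alpha> = 2H - 1 > 0\<close>, each convolution with the kernel multiplies the constant by \<open>\<Gamma>(\<alpha>)\<close>
  and shifts the argument of the denominator \<open>\<Gamma>\<close> by \<open>\<alpha>\<close>.
\<close>

section \<open>Power-law asymptotics of sequences\<close>

lemma asymp_equiv_powr_reindex:
  fixes f :: "nat \<Rightarrow> real" and h :: "nat \<Rightarrow> nat"
  assumes f: "f \<sim>[at_top] (\<lambda>n. c * real n powr s)"
    and h: "filterlim h at_top at_top" "(\<lambda>n. real (h n)) \<sim>[at_top] real"
  shows "(\<lambda>n. f (h n)) \<sim>[at_top] (\<lambda>n. c * real n powr s)"
proof -
  have "(\<lambda>n. f (h n)) \<sim>[at_top] (\<lambda>n. c * real (h n) powr s)"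
    by (rule asymp_equiv_compose'[OF f h(1)])
  also have "\<dots> \<sim>[at_top] (\<lambda>n. c * real n powr s)"
    by (intro asymp_equiv_mult asymp_equiv_refl asymp_equiv_powr_real h(2)) auto
  finally show ?thesis .
qed

lemma asymp_equiv_powr_diff_const:
  fixes f :: "nat \<Rightarrow> real"
  assumes "f \<sim>[at_top] (\<lambda>n. c * real n powr s)"
  shows "(\<lambda>n. f (n - m)) \<sim>[at_top] (\<lambda>n. c * real n powr s)"
proof (rule asymp_equiv_powr_reindex[OF assms filterlim_minus_const_nat_at_top])
  have "(\<lambda>n. real n - real m) \<sim>[at_top] real"
    by real_asymp
  moreover have "eventually (\<lambda>n. real n - real m = real (n - m)) at_top"
    using eventually_ge_at_top[of m] by eventually_elim auto
  ultimately show "(\<lambda>n. real (n - m)) \<sim>[at_top] real"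
    by (rule asymp_equiv_transfer) simp
qed

lemma asymp_equiv_powr_Suc:
  fixes f :: "nat \<Rightarrow> real"
  assumes "f \<sim>[at_top] (\<lambda>n. c * real n powr s)"
  shows "(\<lambda>n. f (Suc n)) \<sim>[at_top] (\<lambda>n. c * real n powr s)"
proof (rule asymp_equiv_powr_reindex[OF assms filterlim_Suc])
  show "(\<lambda>n. real (Suc n)) \<sim>[at_top] real"
    by real_asymp
qed

lemma asymp_equiv_powr_smallo:
  fixes f g :: "nat \<Rightarrow> real"
  assumes f: "f \<sim>[at_top] (\<lambda>n. c * real n powr s)"
    and g: "g \<sim>[at_top] (\<lambda>n. d * real n powr t)"
    and "d \<noteq> 0" "s < t"
  shows "f \<in> o(g)"
proof -
  have "f \<in> O(\<lambda>n. c * real n powr s)"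
    by (rule asymp_equiv_imp_bigo[OF f])
  also have "(\<lambda>n. c * real n powr s) \<in> o(\<lambda>n. d * real n powr t)"
    using assms(3,4) by (cases "c = 0") (simp_all, real_asymp)
  also have "(\<lambda>n. d * real n powr t) \<in> O(g)"
    by (rule asymp_equiv_imp_bigo[OF asymp_equiv_symI[OF g]])
  finally show ?thesis .
qed

lemma asymp_equiv_powr_imp_ratio_tendsto:
  fixes f :: "nat \<Rightarrow> real"
  assumes "f \<sim>[at_top] (\<lambda>n. c * real n powr s)" "c \<noteq> 0"
  shows "(\<lambda>n. f n / (c * real n powr s)) \<longlonglongrightarrow> 1"
  using assms(1)
proof (rule asymp_equivD_strong)
  show "eventually (\<lambda>n. f n \<noteq> 0 \<or> c * real n powr s \<noteq> 0) at_top"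
    using eventually_gt_at_top[of 0] by eventually_elim (use assms(2) in simp)
qed

section \<open>Convolution of power-law sequences\<close>

text \<open>Indices start at 1: neither argument is ever read at position 0.\<close>

definition conv :: "(nat \<Rightarrow> real) \<Rightarrow> (nat \<Rightarrow> real) \<Rightarrow> nat \<Rightarrow> real" where
  "conv a b N = (\<Sum>m\<in>{1..<N}. a m * b (N - m))"

lemma conv_commute: "conv a b = conv b a"
proof
  show "conv a b N = conv b a N" for N
    unfolding conv_def by (rule sum.reindex_bij_witness[of _ "\<lambda>m. N - m" "\<lambda>m. N - m"]) auto
qed

lemma conv_nonneg: "(\<And>m. a m \<ge> 0) \<Longrightarrow> (\<And>m. b m \<ge> 0) \<Longrightarrow> conv a b N \<ge> 0"
  unfolding conv_def by (intro sum_nonneg mult_nonneg_nonneg) auto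

lemma conv_cmult: "conv (\<lambda>m. c * a m) (\<lambda>m. d * b m) N = c * d * conv a b N"
  unfolding conv_def by (simp add: sum_distrib_left mult_ac)

lemma conv_asymp_equiv_left:
  fixes a a' b :: "nat \<Rightarrow> real"
  assumes equiv: "a \<sim>[at_top] a'"
    and a'_nonneg: "\<And>m. a' m \<ge> 0" and b_nonneg: "\<And>m. b m \<ge> 0"
    and tail: "\<And>m. (\<lambda>N. b (N - m)) \<in> o(conv a' b)"
  shows "conv a b \<sim>[at_top] conv a' b"
  unfolding asymp_equiv_altdef
proof (rule landau_o.smallI)
  fix c :: real assume "c > 0"
  then have c: "c / 2 > 0" by simp
  have "(\<lambda>m. a m - a' m) \<in> o(a')"
    using equiv by (rule asymp_equiv_imp_diff_smallo)
  from landau_o.smallD[OF this c] obtain M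
    where M: "\<And>m. m \<ge> M \<Longrightarrow> \<bar>a m - a' m\<bar> \<le> c / 2 * a' m"
    using a'_nonneg by (force simp: eventually_at_top_linorder)
  \<comment> \<open>Beyond \<open>M\<close> the relative error is below \<open>c/2\<close>; the finitely many earlier terms
    are negligible by the tail hypothesis.\<close>
  define head where "head N = (\<Sum>m<M. \<bar>a m - a' m\<bar> * b (N - m))" for N
  have "head \<in> o(conv a' b)"
    unfolding head_def
  proof (intro big_sum_in_smallo)
    fix m
    show "(\<lambda>N. \<bar>a m - a' m\<bar> * b (N - m)) \<in> o(conv a' b)"
      using tail[of m] by (cases "a m = a' m") simp_all
  qed
  from landau_o.smallD[OF this c]
  show "eventually (\<lambda>N. norm (conv a b N - conv a' b N) \<le> c * norm (conv a' b N)) at_top"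
  proof eventually_elim
    case (elim N)
    let ?d = "\<lambda>m. \<bar>a m - a' m\<bar> * b (N - m)"
    have conv_ge: "conv a' b N \<ge> 0" and head_ge: "head N \<ge> 0"
      using a'_nonneg b_nonneg by (auto simp: head_def intro!: conv_nonneg sum_nonneg)
    have "\<bar>conv a b N - conv a' b N\<bar> \<le> (\<Sum>m\<in>{1..<N}. ?d m)"
      unfolding conv_def sum_subtractf[symmetric] left_diff_distrib[symmetric]
      using b_nonneg by (intro order_trans[OF sum_abs]) (simp add: abs_mult)
    also have "\<dots> = (\<Sum>m\<in>{1..<N} \<inter> {..<M}. ?d m) + (\<Sum>m\<in>{1..<N} - {..<M}. ?d m)"
      by (rule sum.Int_Diff) simp
    also have "(\<Sum>m\<in>{1..<N} \<inter> {..<M}. ?d m) \<le> head N"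
      unfolding head_def using b_nonneg by (intro sum_mono2) auto
    also have "(\<Sum>m\<in>{1..<N} - {..<M}. ?d m) \<le> (\<Sum>m\<in>{1..<N} - {..<M}. c / 2 * (a' m * b (N - m)))"
    proof (rule sum_mono)
      fix m assume "m \<in> {1..<N} - {..<M}"
      then have "\<bar>a m - a' m\<bar> \<le> c / 2 * a' m"
        using M by simp
      then show "?d m \<le> c / 2 * (a' m * b (N - m))"
        using b_nonneg[of "N - m"] by (metis mult.assoc mult_right_mono)
    qed
    also have "\<dots> \<le> c / 2 * conv a' b N"
      unfolding conv_def sum_distrib_left[symmetric] using c a'_nonneg b_nonneg
      by (intro mult_left_mono sum_mono2) auto
    finally show ?case
      using elim conv_ge head_ge by simp
  qed
qed

text \<open>Taylor coefficients of \<open>(1 - x) powr -p\<close>, the exactly solvable comparison sequences.\<close>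

definition negbinomial_coeff :: "real \<Rightarrow> nat \<Rightarrow> real" where
  "negbinomial_coeff p n = pochhammer p n / fact n"

lemma negbinomial_coeff_pos: "p > 0 \<Longrightarrow> negbinomial_coeff p n > 0"
  unfolding negbinomial_coeff_def by (simp add: pochhammer_pos)

lemma negbinomial_coeff_add:
  "(\<Sum>k\<le>n. negbinomial_coeff p k * negbinomial_coeff q (n - k)) = negbinomial_coeff (p + q) n"
proof -
  have "negbinomial_coeff (p + q) n
      = (\<Sum>k\<le>n. of_nat (n choose k) / fact n * pochhammer p k * pochhammer q (n - k))"
    unfolding negbinomial_coeff_def pochhammer_binomial_sum
    by (simp add: sum_divide_distrib mult_ac)
  also have "\<dots> = (\<Sum>k\<le>n. negbinomial_coeff p k * negbinomial_coeff q (n - k))"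
    by (intro sum.cong refl) (simp add: binomial_fact negbinomial_coeff_def)
  finally show ?thesis ..
qed

lemma negbinomial_coeff_asymp_equiv:
  assumes "p > 0"
  shows "negbinomial_coeff p \<sim>[at_top] (\<lambda>n. 1 / Gamma p * real n powr (p - 1))"
proof -
  have "rGamma_series p \<longlonglongrightarrow> 1 / Gamma p"
    using rGamma_series_LIMSEQ[of p] by (simp add: rGamma_inverse_Gamma inverse_eq_divide)
  then have "rGamma_series p \<sim>[at_top] (\<lambda>_. 1 / Gamma p)"
    using Gamma_real_pos[OF assms] by (intro tendsto_imp_asymp_equiv_const) auto
  moreover have "(\<lambda>n. real n powr p / (p + real n)) \<sim>[at_top] (\<lambda>n. real n powr (p - 1))"
    by real_asymp
  ultimately have "(\<lambda>n. rGamma_series p n * (real n powr p / (p + real n)))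
      \<sim>[at_top] (\<lambda>n. 1 / Gamma p * real n powr (p - 1))"
    by (rule asymp_equiv_mult)
  moreover have "eventually (\<lambda>n. rGamma_series p n * (real n powr p / (p + real n))
      = negbinomial_coeff p n) at_top"
    using eventually_gt_at_top[of 0]
  proof eventually_elim
    case (elim n)
    then show ?case
      using assms by (simp add: rGamma_series_def negbinomial_coeff_def pochhammer_Suc powr_def)
  qed
  ultimately show ?thesis
    by (rule asymp_equiv_transfer) simp
qed

lemma conv_negbinomial_coeff:
  assumes "N \<ge> 2"
  shows "conv (\<lambda>m. negbinomial_coeff p (m - 1)) (\<lambda>m. negbinomial_coeff q (m - 1)) N
       = negbinomial_coeff (p + q) (N - 2)"
proof -
  obtain n where N: "N = Suc (Suc n)"
    using assms by (metis add_2_eq_Suc le_Suc_ex)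
  have "conv (\<lambda>m. negbinomial_coeff p (m - 1)) (\<lambda>m. negbinomial_coeff q (m - 1)) N
      = (\<Sum>k\<le>n. negbinomial_coeff p k * negbinomial_coeff q (n - k))"
    unfolding conv_def N by (rule sum.reindex_bij_witness[of _ Suc "\<lambda>m. m - 1"]) auto
  then show ?thesis
    by (simp add: N negbinomial_coeff_add)
qed

theorem conv_asymp_equiv_powr:
  fixes a b :: "nat \<Rightarrow> real"
  assumes p: "p > 0" and q: "q > 0" and A: "A > 0" and B: "B > 0"
    and b_nonneg: "\<And>m. b m \<ge> 0"
    and a: "a \<sim>[at_top] (\<lambda>n. A * real n powr (p - 1))"
    and b: "b \<sim>[at_top] (\<lambda>n. B * real n powr (q - 1))"
  shows "conv a b \<sim>[at_top]
           (\<lambda>n. A * B * Gamma p * Gamma q / Gamma (p + q) * real n powr (p + q - 1))"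
    (is "_ \<sim>[at_top] (\<lambda>n. ?K * _)")
proof -
  \<comment> \<open>Replace \<open>b\<close> and then \<open>a\<close> by exact comparison sequences; each tail condition follows
    from the asymptotics established just before.\<close>
  define a' where "a' m = A * Gamma p * negbinomial_coeff p (m - 1)" for m
  define b' where "b' m = B * Gamma q * negbinomial_coeff q (m - 1)" for m
  have K: "?K > 0"
    using p q A B by simp
  have a'_nonneg: "a' m \<ge> 0" and b'_nonneg: "b' m \<ge> 0" for m
    unfolding a'_def b'_def using p q A B
    by (auto intro!: mult_nonneg_nonneg less_imp_le[OF negbinomial_coeff_pos])
  have comparison: "(\<lambda>m. C * Gamma r * negbinomial_coeff r (m - j))
      \<sim>[at_top] (\<lambda>n. C * real n powr (r - 1))" if "r > 0" for C r j
    using asymp_equiv_mult[OF asymp_equiv_refl[of "\<lambda>_. C * Gamma r"]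
        asymp_equiv_powr_diff_const[OF negbinomial_coeff_asymp_equiv[OF that]]]
      Gamma_real_pos[OF that] by simp
  have a'_asymp: "a' \<sim>[at_top] (\<lambda>n. A * real n powr (p - 1))"
    unfolding a'_def by (rule comparison[OF p])
  have b'_asymp: "b' \<sim>[at_top] (\<lambda>n. B * real n powr (q - 1))"
    unfolding b'_def by (rule comparison[OF q])
  have "(\<lambda>N. ?K * Gamma (p + q) * negbinomial_coeff (p + q) (N - 2))
      \<sim>[at_top] (\<lambda>n. ?K * real n powr (p + q - 1))"
    using p q by (intro comparison) simp
  moreover have "eventually (\<lambda>N. ?K * Gamma (p + q) * negbinomial_coeff (p + q) (N - 2)
      = conv a' b' N) at_top"
    using eventually_ge_at_top[of 2]
  proof eventually_elim
    case (elim N)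
    have "Gamma (p + q) \<noteq> 0"
      using Gamma_real_pos[OF add_pos_pos[OF p q]] by linarith
    then have "?K * Gamma (p + q) = A * Gamma p * (B * Gamma q)"
      by simp
    also have "\<dots> * negbinomial_coeff (p + q) (N - 2) = conv a' b' N"
      unfolding a'_def[abs_def] b'_def[abs_def] conv_cmult conv_negbinomial_coeff[OF elim] ..
    finally show ?case .
  qed
  ultimately have exact: "conv a' b' \<sim>[at_top] (\<lambda>n. ?K * real n powr (p + q - 1))"
    by (rule asymp_equiv_transfer) simp
  have "conv b a' \<sim>[at_top] conv b' a'"
  proof (rule conv_asymp_equiv_left[OF _ b'_nonneg a'_nonneg])
    show "b \<sim>[at_top] b'"
      using b asymp_equiv_symI[OF b'_asymp] by (rule asymp_equiv_trans)
    show "(\<lambda>N. a' (N - m)) \<in> o(conv b' a')" for m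
      unfolding conv_commute[of b' a']
      by (rule asymp_equiv_powr_smallo[OF asymp_equiv_powr_diff_const[OF a'_asymp] exact])
        (use K q in auto)
  qed
  then have "conv a' b \<sim>[at_top] conv a' b'"
    unfolding conv_commute[of a'] .
  then have middle: "conv a' b \<sim>[at_top] (\<lambda>n. ?K * real n powr (p + q - 1))"
    using exact by (rule asymp_equiv_trans)
  have "conv a b \<sim>[at_top] conv a' b"
  proof (rule conv_asymp_equiv_left[OF _ a'_nonneg b_nonneg])
    show "a \<sim>[at_top] a'"
      using a asymp_equiv_symI[OF a'_asymp] by (rule asymp_equiv_trans)
    show "(\<lambda>N. b (N - m)) \<in> o(conv a' b)" for m
      by (rule asymp_equiv_powr_smallo[OF asymp_equiv_powr_diff_const[OF b] middle])
        (use K p in auto)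
  qed
  then show ?thesis
    using middle by (rule asymp_equiv_trans)
qed

section \<open>Chain sums and their convolution recursion\<close>

definition chain_lists :: "nat set \<Rightarrow> nat \<Rightarrow> nat \<Rightarrow> nat list set" where
  "chain_lists S k e = {xs. length xs = Suc k \<and> sorted_wrt (<) xs \<and> hd xs \<in> S \<and> last xs = e}"

definition chain_sum :: "real \<Rightarrow> nat set \<Rightarrow> nat \<Rightarrow> nat \<Rightarrow> real" where
  "chain_sum H S k e = (\<Sum>xs\<in>chain_lists S k e. tuple_weight H xs)"

lemma strict_sorted_hd_le:
  fixes xs :: "'a::linorder list"
  shows "sorted_wrt (<) xs \<Longrightarrow> x \<in> set xs \<Longrightarrow> hd xs \<le> x"
  by (cases xs) auto

lemma strict_sorted_le_last:
  fixes xs :: "'a::linorder list"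
  shows "sorted_wrt (<) xs \<Longrightarrow> x \<in> set xs \<Longrightarrow> x \<le> last xs"
  by (induction xs) (auto simp: less_imp_le)

lemma finite_chain_lists: "finite (chain_lists S k e)"
proof (rule finite_subset)
  show "chain_lists S k e \<subseteq> {xs. set xs \<subseteq> {..e} \<and> length xs = Suc k}"
    unfolding chain_lists_def using strict_sorted_le_last by fastforce
  show "finite {xs. set xs \<subseteq> {..e} \<and> length xs = Suc k}"
    by (rule finite_lists_length_eq) simp
qed

lemma chain_lists_0: "chain_lists S 0 e = (if e \<in> S then {[e]} else {})"
proof -
  have "xs \<in> chain_lists S 0 e \<longleftrightarrow> e \<in> S \<and> xs = [e]" for xs
    unfolding chain_lists_def by (cases xs) auto
  then show ?thesis
    by auto
qed

lemma chain_lists_Suc: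
  assumes "0 \<notin> S"
  shows "chain_lists S (Suc k) e = (\<lambda>(m, ys). ys @ [e]) ` (SIGMA m:{1..<e}. chain_lists S k m)"
proof (intro equalityI subsetI)
  fix xs assume "xs \<in> chain_lists S (Suc k) e"
  then have len: "length xs = Suc (Suc k)" and sorted: "sorted_wrt (<) xs"
    and hd: "hd xs \<in> S" and last: "last xs = e"
    by (auto simp: chain_lists_def)
  define ys where "ys = butlast xs"
  have "length ys = Suc k"
    using len by (simp add: ys_def)
  then have "ys \<noteq> []"
    by auto
  have "xs \<noteq> []"
    using len by auto
  then have xs: "xs = ys @ [e]"
    using last unfolding ys_def by (metis append_butlast_last_id)
  then have "sorted_wrt (<) ys" "last ys < e" "hd ys = hd xs"
    using sorted \<open>ys \<noteq> []\<close> by (auto simp: sorted_wrt_append)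
  moreover have "1 \<le> last ys"
  proof -
    have "hd ys \<le> last ys"
      using strict_sorted_hd_le[OF \<open>sorted_wrt (<) ys\<close> last_in_set[OF \<open>ys \<noteq> []\<close>]] .
    moreover have "hd ys \<noteq> 0"
      using hd assms \<open>hd ys = hd xs\<close> by metis
    ultimately show ?thesis
      by simp
  qed
  ultimately have "(last ys, ys) \<in> (SIGMA m:{1..<e}. chain_lists S k m)"
    using len hd by (simp add: chain_lists_def ys_def)
  then show "xs \<in> (\<lambda>(m, ys). ys @ [e]) ` (SIGMA m:{1..<e}. chain_lists S k m)"
    by (rule rev_image_eqI) (simp add: xs)
next
  fix xs assume "xs \<in> (\<lambda>(m, ys). ys @ [e]) ` (SIGMA m:{1..<e}. chain_lists S k m)"
  then obtain m ys where "m < e" and ys: "ys \<in> chain_lists S k m" and xs: "xs = ys @ [e]"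
    by auto
  then have "ys \<noteq> []" and "\<forall>x\<in>set ys. x < e"
    using strict_sorted_le_last[of ys] by (fastforce simp: chain_lists_def)+
  then show "xs \<in> chain_lists S (Suc k) e"
    using ys by (auto simp: chain_lists_def xs sorted_wrt_append)
qed

lemma tuple_weight_nonneg: "tuple_weight H xs \<ge> 0"
  unfolding tuple_weight_def by (intro prod_nonneg) simp

lemma tuple_weight_snoc:
  assumes "ys \<noteq> []"
  shows "tuple_weight H (ys @ [e]) = tuple_weight H ys * \<bar>real e - real (last ys)\<bar> powr (2*H - 2)"
proof -
  let ?L = "length ys"
  have L: "?L \<ge> 1"
    using assms by (cases ys) auto
  have "{1..<length (ys @ [e])} = insert ?L {1..<?L}"
    using L by (simp add: atLeastLessThanSuc)
  moreover have "(\<Prod>j\<in>{1..<?L}. \<bar>real ((ys @ [e]) ! j) - real ((ys @ [e]) ! (j - 1))\<bar> powr (2*H - 2))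
      = tuple_weight H ys"
    unfolding tuple_weight_def by (rule prod.cong) (auto simp: nth_append)
  moreover have "(ys @ [e]) ! (?L - 1) = last ys"
    using L assms by (simp add: nth_append last_conv_nth)
  ultimately show ?thesis
    unfolding tuple_weight_def by (simp add: mult.commute)
qed

lemma chain_sum_nonneg: "chain_sum H S k e \<ge> 0"
  unfolding chain_sum_def by (intro sum_nonneg tuple_weight_nonneg)

lemma chain_sum_0: "chain_sum H S 0 e = (if e \<in> S then 1 else 0)"
  by (simp add: chain_sum_def chain_lists_0 tuple_weight_def)

lemma chain_sum_Suc:
  assumes "0 \<notin> S"
  shows "chain_sum H S (Suc k) = conv (chain_sum H S k) (\<lambda>j. real j powr (2*H - 2))"
proof
  fix e
  have inj: "inj_on (\<lambda>(m, ys). ys @ [e]) (SIGMA m:{1..<e}. chain_lists S k m)"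
    by (auto simp: inj_on_def chain_lists_def)
  have "chain_sum H S (Suc k) e = (\<Sum>(m, ys)\<in>(SIGMA m:{1..<e}. chain_lists S k m). tuple_weight H (ys @ [e]))"
    unfolding chain_sum_def chain_lists_Suc[OF assms]
    by (subst sum.reindex[OF inj]) (simp add: case_prod_unfold)
  also have "\<dots> = (\<Sum>m\<in>{1..<e}. \<Sum>ys\<in>chain_lists S k m. tuple_weight H ys * real (e - m) powr (2*H - 2))"
    unfolding sum.Sigma[OF finite_atLeastLessThan ballI[OF finite_chain_lists], symmetric]
  proof (intro sum.cong refl)
    fix m ys assume "m \<in> {1..<e}" "ys \<in> chain_lists S k m"
    then have "ys \<noteq> []" "real e - real (last ys) = real (e - m)"
      by (auto simp: chain_lists_def)
    then show "tuple_weight H (ys @ [e]) = tuple_weight H ys * real (e - m) powr (2*H - 2)"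
      by (simp add: tuple_weight_snoc)
  qed
  also have "\<dots> = conv (chain_sum H S k) (\<lambda>j. real j powr (2*H - 2)) e"
    by (simp add: conv_def chain_sum_def sum_distrib_right)
  finally show "chain_sum H S (Suc k) e = conv (chain_sum H S k) (\<lambda>j. real j powr (2*H - 2)) e" .
qed

lemma chain_sum_single_step:
  assumes "n \<ge> 2"
  shows "chain_sum H {1} 1 n = real (n - 1) powr (2*H - 2)"
  using assms
  by (simp add: chain_sum_Suc[of "{1}", unfolded One_nat_def] chain_sum_0 conv_def
      mult_delta_left sum.delta of_nat_diff)

lemma pinned_tuples_eq_chain_lists:
  assumes "k \<ge> 1"
  shows "pinned_tuples k n = chain_lists {1} (k - 1) n"
proof -
  have "hd xs = xs ! 0" "last xs = xs ! (k - 1)" if "length xs = k" for xs :: "nat list"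
    using that assms by (simp_all add: hd_conv_nth last_conv_nth flip: length_greater_0_conv)
  then show ?thesis
    using assms unfolding pinned_tuples_def chain_lists_def by force
qed

lemma free_tuples_eq_chain_lists:
  assumes "k \<ge> 1"
  shows "free_tuples k n = (\<Union>e\<in>{1..n}. chain_lists {1..} (k - 1) e)"
proof -
  have "set xs \<subseteq> {1..n} \<longleftrightarrow> 1 \<le> hd xs \<and> last xs \<in> {1..n}"
    if "sorted_wrt (<) xs" "xs \<noteq> []" for xs
    using that strict_sorted_hd_le[OF that(1)] strict_sorted_le_last[OF that(1)]
    by (fastforce simp: subset_iff)
  then show ?thesis
    using assms unfolding free_tuples_def chain_lists_def by (fastforce simp: Suc_le_eq)
qed

lemma sum_free_tuples:
  assumes "k \<ge> 1"
  shows "(\<Sum>xs\<in>free_tuples k n. tuple_weight H xs) = conv (chain_sum H {1..} (k - 1)) (\<lambda>_. 1) (Suc n)"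
proof -
  have "(\<Sum>xs\<in>free_tuples k n. tuple_weight H xs) = (\<Sum>e\<in>{1..n}. chain_sum H {1..} (k - 1) e)"
    unfolding free_tuples_eq_chain_lists[OF assms] chain_sum_def
    by (rule sum.UNION_disjoint) (auto simp: finite_chain_lists, auto simp: chain_lists_def)
  also have "\<dots> = conv (chain_sum H {1..} (k - 1)) (\<lambda>_. 1) (Suc n)"
    unfolding conv_def by (rule sum.cong) auto
  finally show ?thesis .
qed

section \<open>Asymptotics of the chain sums\<close>

lemma conv_powr_kernel_asymp_equiv:
  fixes W :: "nat \<Rightarrow> real"
  assumes "\<alpha> > 0" "p > 0" "\<And>n. W n \<ge> 0"
    and "W \<sim>[at_top] (\<lambda>n. Gamma \<alpha> ^ j / Gamma p * real n powr (p - 1))"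
  shows "conv W (\<lambda>n. real n powr (\<alpha> - 1))
           \<sim>[at_top] (\<lambda>n. Gamma \<alpha> ^ Suc j / Gamma (p + \<alpha>) * real n powr (p + \<alpha> - 1))"
proof -
  have equiv: "conv W (\<lambda>n. real n powr (\<alpha> - 1)) \<sim>[at_top] (\<lambda>n.
      Gamma \<alpha> ^ j / Gamma p * 1 * Gamma p * Gamma \<alpha> / Gamma (p + \<alpha>) * real n powr (p + \<alpha> - 1))"
    by (rule conv_asymp_equiv_powr) (use assms in simp_all)
  have "Gamma \<alpha> ^ j / Gamma p * 1 * Gamma p * Gamma \<alpha> / Gamma (p + \<alpha>)
      = Gamma \<alpha> ^ Suc j / Gamma (p + \<alpha>)"
    using Gamma_real_pos[OF assms(2)] by (simp add: field_simps)
  then show ?thesis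
    using equiv by (simp only:)
qed

lemma chain_sum_asymp_equiv_induct:
  assumes H: "1/2 < H" and S: "0 \<notin> S" and "k\<^sub>0 \<le> k"
    and pos: "(2*H - 1) * real k\<^sub>0 + r > 0"
    and base: "chain_sum H S k\<^sub>0 \<sim>[at_top] (\<lambda>n. Gamma (2*H - 1) ^ k\<^sub>0 / Gamma ((2*H - 1) * real k\<^sub>0 + r)
                 * real n powr ((2*H - 1) * real k\<^sub>0 + r - 1))"
  shows "chain_sum H S k \<sim>[at_top] (\<lambda>n. Gamma (2*H - 1) ^ k / Gamma ((2*H - 1) * real k + r)
           * real n powr ((2*H - 1) * real k + r - 1))"
  using \<open>k\<^sub>0 \<le> k\<close>
proof (induction k rule: nat_induct_at_least)
  case base
  show ?case
    by (rule assms(5))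
next
  case (Suc k)
  have "2*H - 1 > 0"
    using H by simp
  moreover have "(2*H - 1) * real k\<^sub>0 \<le> (2*H - 1) * real k"
    using \<open>2*H - 1 > 0\<close> \<open>k\<^sub>0 \<le> k\<close> by (intro mult_left_mono) simp_all
  ultimately have "(2*H - 1) * real k + r > 0"
    using pos by linarith
  have "chain_sum H S (Suc k) = conv (chain_sum H S k) (\<lambda>n. real n powr ((2*H - 1) - 1))"
    using chain_sum_Suc[OF S, of H k] by simp
  moreover have "conv (chain_sum H S k) (\<lambda>n. real n powr ((2*H - 1) - 1)) \<sim>[at_top]
      (\<lambda>n. Gamma (2*H - 1) ^ Suc k / Gamma ((2*H - 1) * real k + r + (2*H - 1))
        * real n powr ((2*H - 1) * real k + r + (2*H - 1) - 1))"
    using \<open>2*H - 1 > 0\<close> \<open>(2*H - 1) * real k + r > 0\<close> Suc.IH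
    by (intro conv_powr_kernel_asymp_equiv chain_sum_nonneg)
  moreover have "(2*H - 1) * real k + r + (2*H - 1) = (2*H - 1) * real (Suc k) + r"
    by (simp add: algebra_simps)
  ultimately show ?case
    by (simp only:)
qed

lemma pinned_chain_sum_asymp_equiv:
  assumes H: "1/2 < H" and "k \<ge> 1"
  shows "chain_sum H {1} k \<sim>[at_top]
           (\<lambda>n. Gamma (2*H - 1) ^ k / Gamma ((2*H - 1) * real k) * real n powr ((2*H - 1) * real k - 1))"
proof -
  have "2*H - 1 > 0"
    using H by simp
  have "(\<lambda>n. real (n - 1) powr (2*H - 2)) \<sim>[at_top] (\<lambda>n. 1 * real n powr (2*H - 2))"
    by (rule asymp_equiv_powr_diff_const) simp
  moreover have "eventually (\<lambda>n. real (n - 1) powr (2*H - 2) = chain_sum H {1} 1 n) at_top"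
    using eventually_ge_at_top[of 2]
    by eventually_elim (rule chain_sum_single_step[symmetric])
  ultimately have one: "chain_sum H {1} 1 \<sim>[at_top] (\<lambda>n. 1 * real n powr (2*H - 2))"
    by (rule asymp_equiv_transfer) simp
  have "Gamma (2*H - 1) ^ 1 / Gamma ((2*H - 1) * real 1 + 0) = 1"
    using Gamma_real_pos[OF \<open>2*H - 1 > 0\<close>] by simp
  moreover have "(2*H - 1) * real 1 + 0 - 1 = 2*H - 2"
    by simp
  ultimately have base: "chain_sum H {1} 1 \<sim>[at_top] (\<lambda>n. Gamma (2*H - 1) ^ 1
      / Gamma ((2*H - 1) * real 1 + 0) * real n powr ((2*H - 1) * real 1 + 0 - 1))"
    using one by (simp only:)
  have "chain_sum H {1} k \<sim>[at_top] (\<lambda>n. Gamma (2*H - 1) ^ k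
      / Gamma ((2*H - 1) * real k + 0) * real n powr ((2*H - 1) * real k + 0 - 1))"
    by (rule chain_sum_asymp_equiv_induct[OF H _ \<open>k \<ge> 1\<close> _ base])
      (use \<open>2*H - 1 > 0\<close> in simp_all)
  then show ?thesis
    by (simp only: add_0_right)
qed

text \<open>The exponent is left as \<open>p - 1\<close> with \<open>p = (2H - 1) k + 1\<close>, the form that
  \<open>conv_asymp_equiv_powr\<close> expects.\<close>

lemma free_chain_sum_asymp_equiv:
  assumes H: "1/2 < H"
  shows "chain_sum H {1..} k \<sim>[at_top]
           (\<lambda>n. Gamma (2*H - 1) ^ k / Gamma ((2*H - 1) * real k + 1)
              * real n powr ((2*H - 1) * real k + 1 - 1))"
proof (rule chain_sum_asymp_equiv_induct[OF H _ le0])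
  show "chain_sum H {1..} 0 \<sim>[at_top] (\<lambda>n. Gamma (2*H - 1) ^ 0 / Gamma ((2*H - 1) * real 0 + 1)
      * real n powr ((2*H - 1) * real 0 + 1 - 1))"
    using eventually_ge_at_top[of 1]
    by (intro asymp_equiv_refl_ev) (auto simp: chain_sum_0 elim: eventually_mono)
qed simp_all

lemma pinned_tuples_sum_asymp_equiv:
  assumes H: "1/2 < H" and "k \<ge> 2"
  shows "(\<lambda>n. \<Sum>xs\<in>pinned_tuples k n. tuple_weight H xs) \<sim>[at_top]
           (\<lambda>n. Gamma (2*H - 1) ^ (k - 1) / Gamma ((2*H - 1) * real (k - 1))
              * real n powr ((2*H - 1) * real (k - 1) - 1))"
  unfolding pinned_tuples_eq_chain_lists[OF order.trans[OF one_le_numeral \<open>k \<ge> 2\<close>]]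
    chain_sum_def[symmetric]
  using H \<open>k \<ge> 2\<close> by (intro pinned_chain_sum_asymp_equiv) auto

lemma free_tuples_sum_asymp_equiv:
  assumes H: "1/2 < H" and "k \<ge> 1"
  shows "(\<lambda>n. \<Sum>xs\<in>free_tuples k n. tuple_weight H xs) \<sim>[at_top]
           (\<lambda>n. Gamma (2*H - 1) ^ (k - 1) / Gamma ((2*H - 1) * real (k - 1) + 2)
              * real n powr ((2*H - 1) * real (k - 1) + 1))"
proof -
  define p where "p = (2*H - 1) * real (k - 1) + 1"
  have "2*H - 1 > 0"
    using H by simp
  then have p: "p > 0"
    by (simp add: p_def add_nonneg_pos)
  have "(\<lambda>_. 1) \<sim>[at_top] (\<lambda>n. 1 * real n powr (1 - 1))"
    using eventually_gt_at_top[of 0] by (intro asymp_equiv_refl_ev) (auto elim: eventually_mono)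
  then have "conv (chain_sum H {1..} (k - 1)) (\<lambda>_. 1) \<sim>[at_top]
      (\<lambda>n. Gamma (2*H - 1) ^ (k - 1) / Gamma p * 1 * Gamma p * Gamma 1 / Gamma (p + 1)
        * real n powr (p + 1 - 1))"
    using free_chain_sum_asymp_equiv[OF H, of "k - 1"] p \<open>2*H - 1 > 0\<close>
    by (intro conv_asymp_equiv_powr chain_sum_nonneg) (simp_all add: p_def)
  then have "(\<lambda>n. conv (chain_sum H {1..} (k - 1)) (\<lambda>_. 1) (Suc n)) \<sim>[at_top]
      (\<lambda>n. Gamma (2*H - 1) ^ (k - 1) / Gamma p * 1 * Gamma p * Gamma 1 / Gamma (p + 1)
        * real n powr (p + 1 - 1))"
    by (rule asymp_equiv_powr_Suc)
  moreover have "Gamma (2*H - 1) ^ (k - 1) / Gamma p * 1 * Gamma p * Gamma 1 / Gamma (p + 1)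
      = Gamma (2*H - 1) ^ (k - 1) / Gamma ((2*H - 1) * real (k - 1) + 2)"
    using Gamma_real_pos[OF p] by (simp add: p_def add.assoc)
  moreover have "p + 1 - 1 = (2*H - 1) * real (k - 1) + 1"
    by (simp add: p_def)
  ultimately show ?thesis
    unfolding sum_free_tuples[OF \<open>k \<ge> 1\<close>] by (simp only:)
qed

theorem lemma6p3:
  fixes H :: real and k :: nat
  assumes "1/2 < H" and "H < 1" and "k \<ge> 2"
  shows "((\<lambda>n. (\<Sum>xs\<in>pinned_tuples k n. tuple_weight H xs) /
              (Gamma (2*H - 1) ^ (k - 1) / Gamma ((2*H - 1) * real (k - 1))
                 * real n powr ((2*H - 1) * real (k - 1) - 1))) \<longlonglongrightarrow> 1) \<and>
         ((\<lambda>n. (\<Sum>xs\<in>free_tuples k n. tuple_weight H xs) /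
              (Gamma (2*H - 1) ^ (k - 1) / Gamma ((2*H - 1) * real (k - 1) + 2)
                 * real n powr ((2*H - 1) * real (k - 1) + 1))) \<longlonglongrightarrow> 1)"
proof -
  have \<alpha>: "2*H - 1 > 0" and p: "(2*H - 1) * real (k - 1) > 0"
    using assms by simp_all
  have "Gamma (2*H - 1) ^ (k - 1) / Gamma ((2*H - 1) * real (k - 1)) > 0"
    "Gamma (2*H - 1) ^ (k - 1) / Gamma ((2*H - 1) * real (k - 1) + 2) > 0"
    by (intro divide_pos_pos zero_less_power Gamma_real_pos \<alpha> p add_pos_pos zero_less_numeral)+
  with \<open>k \<ge> 2\<close> show ?thesis
    by (intro conjI asymp_equiv_powr_imp_ratio_tendsto pinned_tuples_sum_asymp_equiv
        free_tuples_sum_asymp_equiv assms order.strict_implies_not_eq[symmetric]) auto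
qed

end
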